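(* Let $(X,d^X)$ and $(Y,d^Y)$ be compact metric spaces, let $f$ be a homeomorphism of $X$, let $\mu$ be a Borel measure on $X$ with $\mu(X)>0$, and let $h:X\to Y$ be a homeomorphism. Then (i) $UE^{h^*(\mu)}_{h\circ f\circ h^{-1}}(Y)=h(UE^\mu_f(X))$; (ii) $Sh^{h^*(\mu)}_{h\circ f\circ h^{-1}}(Y)=h(Sh^\mu_f(X))$, where $h^*(\mu)=\mu\circ h^{-1}$ is the Borel measure on $Y$ given by $h^*(\mu)(A)=\mu(h^{-1}(A))$.
   Context: For a homeomorphism $f$ of a compact metric space $(X,d)$ and a Borel measure $\mu$ on $X$: $B(x,\epsilon)=\{y:d(x,y)<\epsilon\}$. For a point $x$, $\mathfrak{c}>0$ and $z\in B(x,\mathfrak{c})$, $\Gamma^{\mathfrak{c}}_f(z)=\{y\in B(x,\mathfrak{c}): d(f^n(y),f^n(z))\le\mathfrak{c}\ \forall n\in\mathbb{Z}\}$. $x$ is a $\mu$-uniformly expansive point of $f$ if there is $\mathfrak{c}>0$ with $\mu(\Gamma^{\mathfrak{c}}_f(z))=0$ for every $z\in B(x,\mathfrak{c})$; $UE^\mu_f(X)$ is the set of such points. A $\delta$-pseudo orbit for $f$ is $\{x_n\}_{n\in\mathbb{Z}}$ with $d(f(x_n),x_{n+1})<\delta$ for all $n$; it is through a set $B$ if $x_0\in B$; it is $\epsilon$-traced if there is $y\in X$ with $d(f^n(y),x_n)<\epsilon$ for all $n$. $x$ is a $\mu$-shadowable point of $f$ if for every $\epsilon>0$ there are $\delta>0$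 and a Borel set $B$ with $\mu(X\setminus B)=0$ such that every $\delta$-pseudo orbit for $f$ through $B\cap B(x,\delta)$ is $\epsilon$-traced by some point of $X$; $Sh^\mu_f(X)$ is the set of such points. *)

theory Defs
  imports "HOL-Analysis.Analysis"
begin

definition zpow :: "'a set \<Rightarrow> ('a \<Rightarrow> 'a) \<Rightarrow> int \<Rightarrow> 'a \<Rightarrow> 'a" where
  "zpow X f n = (if n \<ge> 0 then f ^^ nat n else (inv_into X f) ^^ nat (- n))"

definition Gamma :: "'a::metric_space set \<Rightarrow> ('a \<Rightarrow> 'a) \<Rightarrow> real \<Rightarrow> 'a \<Rightarrow> 'a \<Rightarrow> 'a set" where
  "Gamma X f c x z = {y \<in> ball x c \<inter> X. \<forall>n::int. dist (zpow X f n y) (zpow X f n z) \<le> c}"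

definition UE :: "'a::metric_space measure \<Rightarrow> ('a \<Rightarrow> 'a) \<Rightarrow> 'a set \<Rightarrow> 'a set" where
  "UE M f X = {x \<in> X. \<exists>c>0. \<forall>z \<in> ball x c \<inter> X. emeasure M (Gamma X f c x z) = 0}"

definition pseudo_orbit :: "'a::metric_space set \<Rightarrow> ('a \<Rightarrow> 'a) \<Rightarrow> real \<Rightarrow> (int \<Rightarrow> 'a) \<Rightarrow> bool" where
  "pseudo_orbit X f \<delta> xs \<longleftrightarrow> (\<forall>n. xs n \<in> X) \<and> (\<forall>n. dist (f (xs n)) (xs (n + 1)) < \<delta>)"

definition traced :: "'a::metric_space set \<Rightarrow> ('a \<Rightarrow> 'a) \<Rightarrow> real \<Rightarrow> (int \<Rightarrow> 'a) \<Rightarrow> bool" where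
  "traced X f \<epsilon> xs \<longleftrightarrow> (\<exists>y\<in>X. \<forall>n. dist (zpow X f n y) (xs n) < \<epsilon>)"

definition Sh :: "'a::metric_space measure \<Rightarrow> ('a \<Rightarrow> 'a) \<Rightarrow> 'a set \<Rightarrow> 'a set" where
  "Sh M f X = {x \<in> X. \<forall>\<epsilon>>0. \<exists>\<delta>>0. \<exists>B \<in> sets M. emeasure M (X - B) = 0 \<and>
      (\<forall>xs. pseudo_orbit X f \<delta> xs \<and> xs 0 \<in> B \<inter> ball x \<delta> \<longrightarrow> traced X f \<epsilon> xs)}"

end

theory Submission
  imports Defs
begin

(* Conjugating by h transports the whole picture: the iterates of h \<circ> f \<circ> h\<inverse> are
   h \<circ> f\<^sup>n \<circ> h\<inverse>, and the null sets of h\<^sup>*\<mu> are the images of the null sets of \<mu>.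
   On compact spaces h and h\<inverse> are uniformly continuous, so every scale for f has a
   matching scale for the conjugate: the \<Gamma>-sets of the conjugate pull back into \<Gamma>-sets of f,
   pseudo orbits pull back to pseudo orbits, and tracing orbits push forward. This gives
   the inclusions h(UE) \<subseteq> UE' and h(Sh) \<subseteq> Sh'; the reverse inclusions are the same
   statement for the inverse conjugacy h\<inverse>. *)

lemma homeomorphism_inv_into_eq:
  assumes "homeomorphism X Y f f'" "y \<in> Y"
  shows "inv_into X f y = f' y"
proof (rule inv_into_f_eq)
  show "inj_on f X"
    using assms(1) by (metis homeomorphism_apply1 inj_on_inverseI)
qed (use assms in \<open>auto simp: homeomorphism_def\<close>)

lemma homeomorphism_inv_into:
  assumes "homeomorphism X Y f f'"
  shows "homeomorphism Y X (inv_into X f) f"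
  by (rule homeomorphism_cong[OF homeomorphism_symD[OF assms]])
     (simp_all add: homeomorphism_inv_into_eq[OF assms])

lemma homeomorphism_funpow:
  assumes "homeomorphism X X f f'"
  shows "homeomorphism X X (f ^^ n) (f' ^^ n)"
proof (induction n)
  case 0
  show ?case by (simp add: homeomorphism_ident id_def)
next
  case (Suc n)
  from homeomorphism_compose[OF assms Suc.IH]
  show ?case by (simp only: funpow_Suc_right[of n f] funpow.simps(2)[of n f'])
qed

lemma homeomorphism_zpow:
  assumes "homeomorphism X X f f'"
  shows "homeomorphism X X (zpow X f n) (zpow X f (- n))"
proof -
  have inv: "homeomorphism X X (inv_into X f) f"
    using homeomorphism_inv_into[OF assms] .
  show ?thesis
  proof (cases "n \<ge> 0")
    case True
    then have "zpow X f n = f ^^ nat n" "zpow X f (- n) = inv_into X f ^^ nat n"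
      by (cases "n = 0"; simp add: zpow_def)+
    then show ?thesis
      using homeomorphism_symD[OF homeomorphism_funpow[OF inv]] by simp
  next
    case False
    then have "zpow X f n = inv_into X f ^^ nat (- n)" "zpow X f (- n) = f ^^ nat (- n)"
      by (simp_all add: zpow_def)
    then show ?thesis
      using homeomorphism_funpow[OF inv] by simp
  qed
qed

lemma funpow_conjugate:
  assumes "\<And>x. x \<in> X \<Longrightarrow> \<phi> x \<in> X" "\<And>x. x \<in> X \<Longrightarrow> \<psi> (h x) = h (\<phi> x)" "p \<in> X"
  shows "(\<psi> ^^ n) (h p) = h ((\<phi> ^^ n) p)"
  using assms(3)
proof (induction n arbitrary: p)
  case (Suc n)
  then show ?case
    by (simp only: funpow_Suc_right comp_apply assms(1,2))
qed simp

lemma Gamma_in_sets_restrict_space: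
  assumes "homeomorphism X X f f'"
  shows "Gamma X f c x z \<in> sets (restrict_space borel X)"
proof -
  have "closedin (top_of_set X) (X \<inter> (\<lambda>y. dist (zpow X f n y) (zpow X f n z)) -` {..c})" for n
    using homeomorphism_cont1[OF homeomorphism_zpow[OF assms]]
    by (intro continuous_closedin_preimage continuous_intros) auto
  then have "closedin (top_of_set X) (\<Inter>n. X \<inter> (\<lambda>y. dist (zpow X f n y) (zpow X f n z)) -` {..c})"
    by blast
  then obtain T where "closed T"
    and T: "(\<Inter>n. X \<inter> (\<lambda>y. dist (zpow X f n y) (zpow X f n z)) -` {..c}) = X \<inter> T"
    by (auto simp: closedin_closed)
  have "Gamma X f c x z = X \<inter> (ball x c \<inter> T)"
    using T unfolding Gamma_def by blast
  moreover have "ball x c \<inter> T \<in> sets borel"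
    using \<open>closed T\<close> by auto
  ultimately show ?thesis
    by (simp add: sets_restrict_space)
qed

lemma uniformly_continuous_on_le:
  assumes "uniformly_continuous_on S \<phi>" "\<epsilon> > 0"
  obtains \<delta> where "\<delta> > 0" "\<And>a b. a \<in> S \<Longrightarrow> b \<in> S \<Longrightarrow> dist a b \<le> \<delta> \<Longrightarrow> dist (\<phi> a) (\<phi> b) < \<epsilon>"
proof -
  obtain d where "d > 0" "\<And>a b. a \<in> S \<Longrightarrow> b \<in> S \<Longrightarrow> dist b a < d \<Longrightarrow> dist (\<phi> b) (\<phi> a) < \<epsilon>"
    using assms unfolding uniformly_continuous_on_def by metis
  then show ?thesis
    by (intro that[of "d / 2"]) (auto simp: dist_commute)
qed

locale conjugacy =
  fixes X :: "'a::metric_space set" and Y :: "'b::metric_space set"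
    and f f' :: "'a \<Rightarrow> 'a" and h :: "'a \<Rightarrow> 'b" and k :: "'b \<Rightarrow> 'a" and g :: "'b \<Rightarrow> 'b"
  assumes compact_X: "compact X"
    and homeomorphism_f: "homeomorphism X X f f'"
    and homeomorphism_h: "homeomorphism X Y h k"
    and g_conj: "\<And>y. y \<in> Y \<Longrightarrow> g y = h (f (k y))"
begin

lemma h_in [simp]: "x \<in> X \<Longrightarrow> h x \<in> Y"
  and k_in [simp]: "y \<in> Y \<Longrightarrow> k y \<in> X"
  and k_h [simp]: "x \<in> X \<Longrightarrow> k (h x) = x"
  and h_k [simp]: "y \<in> Y \<Longrightarrow> h (k y) = y"
  and f_in [simp]: "x \<in> X \<Longrightarrow> f x \<in> X"
  and f'_in [simp]: "x \<in> X \<Longrightarrow> f' x \<in> X"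
  using homeomorphism_h homeomorphism_f by (auto simp: homeomorphism_def)

lemma g_h [simp]: "x \<in> X \<Longrightarrow> g (h x) = h (f x)"
  by (simp add: g_conj)

lemma compact_Y: "compact Y"
  using compact_continuous_image[OF homeomorphism_cont1[OF homeomorphism_h] compact_X]
  by (simp add: homeomorphism_image1[OF homeomorphism_h])

lemma uniformly_continuous_h: "uniformly_continuous_on X h"
  using compact_uniformly_continuous[OF homeomorphism_cont1[OF homeomorphism_h] compact_X] .

lemma uniformly_continuous_k: "uniformly_continuous_on Y k"
  using compact_uniformly_continuous[OF homeomorphism_cont2[OF homeomorphism_h] compact_Y] .

lemma homeomorphism_g: "homeomorphism Y Y g (h \<circ> f' \<circ> k)"
proof (rule homeomorphism_cong)
  show "homeomorphism Y Y (h \<circ> (f \<circ> k)) (h \<circ> f' \<circ> k)"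
    using homeomorphism_compose[OF homeomorphism_compose[OF homeomorphism_symD[OF homeomorphism_h]
          homeomorphism_f] homeomorphism_h] .
qed (simp_all add: g_conj)

lemma conjugacy_sym: "conjugacy Y X g (h \<circ> f' \<circ> k) k h f"
  by unfold_locales
     (simp_all add: compact_Y homeomorphism_g homeomorphism_symD[OF homeomorphism_h] g_conj)

lemma zpow_in: "p \<in> X \<Longrightarrow> zpow X f n p \<in> X"
  using homeomorphism_image1[OF homeomorphism_zpow[OF homeomorphism_f]] by blast

lemma zpow_conj:
  assumes "p \<in> X"
  shows "zpow Y g n (h p) = h (zpow X f n p)"
proof -
  have inv_conj: "inv_into Y g (h q) = h (inv_into X f q)" if "q \<in> X" for q
    using that by (simp add: homeomorphism_inv_into_eq[OF homeomorphism_g]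
        homeomorphism_inv_into_eq[OF homeomorphism_f])
  have inv_in: "inv_into X f q \<in> X" if "q \<in> X" for q
    using that by (simp add: homeomorphism_inv_into_eq[OF homeomorphism_f])
  show ?thesis
    unfolding zpow_def
    using funpow_conjugate[of X f g h, OF f_in g_h assms]
      funpow_conjugate[of X "inv_into X f" "inv_into Y g" h, OF inv_in inv_conj assms]
    by simp
qed

lemma preimage_Gamma_subset:
  assumes k_c': "\<And>a b. a \<in> Y \<Longrightarrow> b \<in> Y \<Longrightarrow> dist a b \<le> c' \<Longrightarrow> dist (k a) (k b) < c"
    and "x \<in> X" "z \<in> Y"
  shows "h -` Gamma Y g c' (h x) z \<inter> X \<subseteq> Gamma X f c x (k z)"
proof
  fix p assume "p \<in> h -` Gamma Y g c' (h x) z \<inter> X"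
  then have "p \<in> X" and "dist (h x) (h p) < c'"
    and orbit: "\<And>n. dist (h (zpow X f n p)) (h (zpow X f n (k z))) \<le> c'"
    using \<open>z \<in> Y\<close> zpow_conj[of p] zpow_conj[of "k z"] by (auto simp: Gamma_def)
  have "dist x p < c"
    using k_c'[of "h x" "h p"] \<open>x \<in> X\<close> \<open>p \<in> X\<close> \<open>dist (h x) (h p) < c'\<close> by simp
  moreover have "dist (zpow X f n p) (zpow X f n (k z)) \<le> c" for n
    using k_c'[OF _ _ orbit[of n]] zpow_in \<open>p \<in> X\<close> \<open>z \<in> Y\<close> by simp
  ultimately show "p \<in> Gamma X f c x (k z)"
    using \<open>p \<in> X\<close> by (simp add: Gamma_def)
qed

lemma pseudo_orbit_pullback:
  assumes k_\<delta>': "\<And>a b. a \<in> Y \<Longrightarrow> b \<in> Y \<Longrightarrow> dist a b < \<delta>' \<Longrightarrow> dist (k a) (k b) < \<delta>"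
    and "pseudo_orbit Y g \<delta>' ys"
  shows "pseudo_orbit X f \<delta> (k \<circ> ys)"
proof -
  have "ys n \<in> Y" "dist (g (ys n)) (ys (n + 1)) < \<delta>'" for n
    using assms(2) by (auto simp: pseudo_orbit_def)
  then show ?thesis
    using k_\<delta>'[of "g (ys n)" "ys (n + 1)" for n] by (auto simp: pseudo_orbit_def g_conj)
qed

lemma traced_pushforward:
  assumes h_\<epsilon>: "\<And>a b. a \<in> X \<Longrightarrow> b \<in> X \<Longrightarrow> dist a b < \<epsilon> \<Longrightarrow> dist (h a) (h b) < \<epsilon>'"
    and "\<And>n. ys n \<in> Y" and "traced X f \<epsilon> (k \<circ> ys)"
  shows "traced Y g \<epsilon>' ys"
proof -
  obtain p where "p \<in> X" and "\<And>n. dist (zpow X f n p) (k (ys n)) < \<epsilon>"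
    using assms(3) by (auto simp: traced_def)
  then have "dist (zpow Y g n (h p)) (ys n) < \<epsilon>'" for n
    using h_\<epsilon>[OF zpow_in k_in] assms(2) by (simp add: zpow_conj)
  then show ?thesis
    unfolding traced_def using h_in[OF \<open>p \<in> X\<close>] by blast
qed

end

locale measured_conjugacy = conjugacy +
  fixes M :: "'a::metric_space measure" and N :: "'b::metric_space measure"
  assumes sets_M: "sets M = sets (restrict_space borel X)"
    and sets_N: "sets N = sets (restrict_space borel Y)"
    and emeasure_N: "\<And>A. A \<in> sets N \<Longrightarrow> emeasure N A = emeasure M (h -` A \<inter> X)"
begin

lemma space_M: "space M = X"
  using sets_eq_imp_space_eq[OF sets_M] by (simp add: space_restrict_space)

lemma space_N: "space N = Y"
  using sets_eq_imp_space_eq[OF sets_N] by (simp add: space_restrict_space)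

lemma k_measurable: "k \<in> measurable N M"
proof -
  have "k \<in> measurable (restrict_space borel Y) (restrict_space borel X)"
    using homeomorphism_h
    by (intro measurable_restrict_space2 borel_measurable_continuous_on_restrict)
       (auto simp: space_restrict_space homeomorphism_def)
  then show ?thesis
    using measurable_cong_sets[OF sets_N sets_M] by simp
qed

lemma emeasure_M: "A \<in> sets M \<Longrightarrow> emeasure M A = emeasure N (k -` A \<inter> Y)"
proof -
  assume A: "A \<in> sets M"
  then have "A \<subseteq> X"
    using sets.sets_into_space space_M by blast
  have "k -` A \<inter> Y \<in> sets N"
    using measurable_sets[OF k_measurable A] by (simp add: space_N)
  then have "emeasure N (k -` A \<inter> Y) = emeasure M (h -` (k -` A \<inter> Y) \<inter> X)"
    by (rule emeasure_N)
  also have "h -` (k -` A \<inter> Y) \<inter> X = A"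
    using \<open>A \<subseteq> X\<close> by auto
  finally show ?thesis by simp
qed

lemma measured_conjugacy_sym: "measured_conjugacy Y X g (h \<circ> f' \<circ> k) k h f N M"
  using conjugacy_sym
  by (simp add: measured_conjugacy_def measured_conjugacy_axioms_def sets_M sets_N emeasure_M)

lemma emeasure_N_le:
  assumes "h -` A \<inter> X \<subseteq> B" "B \<in> sets M"
  shows "emeasure N A \<le> emeasure M B"
proof (cases "A \<in> sets N")
  case True
  then show ?thesis
    using emeasure_mono[OF assms] by (simp add: emeasure_N)
qed (simp add: emeasure_notin_sets)

lemma image_UE_subset: "h ` UE M f X \<subseteq> UE N g Y"
proof (intro image_subsetI)
  fix x assume "x \<in> UE M f X"
  then obtain c where "x \<in> X" "c > 0"
    and null: "\<And>z. z \<in> ball x c \<inter> X \<Longrightarrow> emeasure M (Gamma X f c x z) = 0"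
    unfolding UE_def by blast
  obtain c' where "c' > 0"
    and k_c': "\<And>a b. a \<in> Y \<Longrightarrow> b \<in> Y \<Longrightarrow> dist a b \<le> c' \<Longrightarrow> dist (k a) (k b) < c"
    using uniformly_continuous_on_le[OF uniformly_continuous_k \<open>c > 0\<close>] by blast
  have "emeasure N (Gamma Y g c' (h x) z) = 0" if "z \<in> ball (h x) c' \<inter> Y" for z
  proof -
    have "k z \<in> ball x c \<inter> X"
      using k_c'[of "h x" z] that \<open>x \<in> X\<close> by simp
    have "emeasure N (Gamma Y g c' (h x) z) \<le> emeasure M (Gamma X f c x (k z))"
      using preimage_Gamma_subset[OF k_c' \<open>x \<in> X\<close>] that
        Gamma_in_sets_restrict_space[OF homeomorphism_f] sets_M
      by (intro emeasure_N_le) auto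
    then show ?thesis
      using null[OF \<open>k z \<in> ball x c \<inter> X\<close>] by simp
  qed
  then show "h x \<in> UE N g Y"
    using \<open>x \<in> X\<close> \<open>c' > 0\<close> by (auto simp: UE_def)
qed

lemma conull_preimage:
  assumes "B \<in> sets M" "emeasure M (X - B) = 0"
  shows "k -` B \<inter> Y \<in> sets N" "emeasure N (Y - (k -` B \<inter> Y)) = 0"
proof -
  show "k -` B \<inter> Y \<in> sets N"
    using measurable_sets[OF k_measurable assms(1)] by (simp add: space_N)
  then have "Y - (k -` B \<inter> Y) \<in> sets N"
    using sets.compl_sets space_N by metis
  moreover have "h -` (Y - (k -` B \<inter> Y)) \<inter> X = X - B"
    by auto
  ultimately show "emeasure N (Y - (k -` B \<inter> Y)) = 0"
    using assms(2) by (simp add: emeasure_N)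
qed

lemma image_Sh_subset: "h ` Sh M f X \<subseteq> Sh N g Y"
proof (intro image_subsetI)
  fix x assume x: "x \<in> Sh M f X"
  then have "x \<in> X" by (simp add: Sh_def)
  have "\<exists>\<delta>'>0. \<exists>B' \<in> sets N. emeasure N (Y - B') = 0 \<and>
      (\<forall>ys. pseudo_orbit Y g \<delta>' ys \<and> ys 0 \<in> B' \<inter> ball (h x) \<delta>' \<longrightarrow> traced Y g \<epsilon>' ys)"
    if "\<epsilon>' > 0" for \<epsilon>'
  proof -
    obtain \<epsilon> where "\<epsilon> > 0"
      and h_\<epsilon>: "\<And>a b. a \<in> X \<Longrightarrow> b \<in> X \<Longrightarrow> dist a b < \<epsilon> \<Longrightarrow> dist (h a) (h b) < \<epsilon>'"
      using uniformly_continuous_h \<open>\<epsilon>' > 0\<close> unfolding uniformly_continuous_on_def by metis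
    obtain \<delta> B where "\<delta> > 0" "B \<in> sets M" "emeasure M (X - B) = 0"
      and shadowing: "\<And>xs. pseudo_orbit X f \<delta> xs \<Longrightarrow> xs 0 \<in> B \<inter> ball x \<delta> \<Longrightarrow> traced X f \<epsilon> xs"
      using x \<open>\<epsilon> > 0\<close> unfolding Sh_def by blast
    obtain \<delta>' where "\<delta>' > 0"
      and k_\<delta>': "\<And>a b. a \<in> Y \<Longrightarrow> b \<in> Y \<Longrightarrow> dist a b < \<delta>' \<Longrightarrow> dist (k a) (k b) < \<delta>"
      using uniformly_continuous_k \<open>\<delta> > 0\<close> unfolding uniformly_continuous_on_def by metis
    have "traced Y g \<epsilon>' ys"
      if ys: "pseudo_orbit Y g \<delta>' ys" "ys 0 \<in> (k -` B \<inter> Y) \<inter> ball (h x) \<delta>'" for ys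
    proof -
      have "\<And>n. ys n \<in> Y"
        using ys(1) by (simp add: pseudo_orbit_def)
      have "(k \<circ> ys) 0 \<in> B \<inter> ball x \<delta>"
        using ys(2) k_\<delta>'[of "h x" "ys 0"] \<open>x \<in> X\<close> by simp
      then have "traced X f \<epsilon> (k \<circ> ys)"
        using shadowing pseudo_orbit_pullback[OF k_\<delta>' ys(1)] by blast
      then show ?thesis
        using traced_pushforward[OF h_\<epsilon>] \<open>\<And>n. ys n \<in> Y\<close> by blast
    qed
    then show ?thesis
      using \<open>\<delta>' > 0\<close> conull_preimage[OF \<open>B \<in> sets M\<close> \<open>emeasure M (X - B) = 0\<close>]
      by blast
  qed
  then show "h x \<in> Sh N g Y"
    using \<open>x \<in> X\<close> by (simp add: Sh_def)
qed

lemma eq_image_if_inverse_image_subset: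
  assumes "h ` A \<subseteq> B" "k ` B \<subseteq> A" "B \<subseteq> Y"
  shows "B = h ` A"
proof
  show "B \<subseteq> h ` A"
  proof
    fix y assume "y \<in> B"
    then have "y = h (k y)" "k y \<in> A"
      using assms(2,3) by auto
    then show "y \<in> h ` A" by blast
  qed
qed (use assms(1) in blast)

lemma UE_eq_image: "UE N g Y = h ` UE M f X"
proof -
  interpret inverse: measured_conjugacy Y X g "h \<circ> f' \<circ> k" k h f N M
    by (rule measured_conjugacy_sym)
  show ?thesis
    using image_UE_subset inverse.image_UE_subset
    by (intro eq_image_if_inverse_image_subset) (auto simp: UE_def)
qed

lemma Sh_eq_image: "Sh N g Y = h ` Sh M f X"
proof -
  interpret inverse: measured_conjugacy Y X g "h \<circ> f' \<circ> k" k h f N M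
    by (rule measured_conjugacy_sym)
  show ?thesis
    using image_Sh_subset inverse.image_Sh_subset
    by (intro eq_image_if_inverse_image_subset) (auto simp: Sh_def)
qed

end

lemma measured_conjugacy_distr:
  assumes "compact X" "homeomorphism X X f f'" "homeomorphism X Y h k"
    and sets_M: "sets M = sets (restrict_space borel X)"
  shows "measured_conjugacy X Y f f' h k (h \<circ> f \<circ> inv_into X h) M (distr M (restrict_space borel Y) h)"
proof -
  interpret conjugacy X Y f f' h k "h \<circ> f \<circ> inv_into X h"
    using assms(1-3) by unfold_locales (simp_all add: homeomorphism_inv_into_eq)
  have "h \<in> measurable (restrict_space borel X) (restrict_space borel Y)"
    using assms(3)
    by (intro measurable_restrict_space2 borel_measurable_continuous_on_restrict)
       (auto simp: space_restrict_space homeomorphism_def)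
  then have "h \<in> measurable M (restrict_space borel Y)"
    using measurable_cong_sets[OF sets_M refl, of "restrict_space borel Y"] by simp
  moreover have "space M = X"
    using sets_eq_imp_space_eq[OF sets_M] by (simp add: space_restrict_space)
  ultimately show ?thesis
    using sets_M by unfold_locales (simp_all add: emeasure_distr)
qed

theorem proposition3p5:
  fixes X :: "'a::metric_space set" and Y :: "'b::metric_space set"
    and f :: "'a \<Rightarrow> 'a" and h :: "'a \<Rightarrow> 'b" and M :: "'a measure"
  assumes "compact X" and "compact Y"
    and "\<exists>g. homeomorphism X X f g"
    and "sets M = sets (restrict_space borel X)"
    and "emeasure M X > 0"
    and "\<exists>k. homeomorphism X Y h k"
  shows "UE (distr M (restrict_space borel Y) h) (h \<circ> f \<circ> inv_into X h) Y = h ` UE M f X \<and>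
         Sh (distr M (restrict_space borel Y) h) (h \<circ> f \<circ> inv_into X h) Y = h ` Sh M f X"
proof -
  obtain f' k where "homeomorphism X X f f'" "homeomorphism X Y h k"
    using assms(3,6) by blast
  then interpret measured_conjugacy X Y f f' h k "h \<circ> f \<circ> inv_into X h"
      M "distr M (restrict_space borel Y) h"
    using measured_conjugacy_distr assms(1,4) by blast
  show ?thesis
    using UE_eq_image Sh_eq_image by simp
qed

end
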